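(* Let $\mathbf u$ be an infinite word whose language is closed under reversal, and suppose there exists an integer $H$ such that for every factor $f$ of $\mathbf u$ with $|f|\ge H$ the longest palindromic suffix of $f$ occurs exactly once in $f$. Then $$2+\mathcal C(n+1)-\mathcal C(n)=\mathcal P(n+1)+\mathcal P(n)\quad\text{for every } n\ge H.$$
   Context: For a finite word $w$, $\overline{w}$ denotes its reversal; $w$ is a palindrome if $w=\overline w$. The language of $\mathbf u$ is closed under reversal if $\overline w$ is a factor of $\mathbf u$ whenever $w$ is. $\mathcal C(n)$ is the number of distinct factors of $\mathbf u$ of length $n$ and $\mathcal P(n)$ the number of distinct palindromic factors of $\mathbf u$ of length $n$. *)

theory Defs
  imports Main
begin

definition factor :: "(nat \<Rightarrow> 'a) \<Rightarrow> 'a list \<Rightarrow> bool" where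
  "factor u w \<longleftrightarrow> (\<exists>i. w = map u [i..<i + length w])"

definition palindrome :: "'a list \<Rightarrow> bool" where
  "palindrome w \<longleftrightarrow> rev w = w"

definition closed_under_reversal :: "(nat \<Rightarrow> 'a) \<Rightarrow> bool" where
  "closed_under_reversal u \<longleftrightarrow> (\<forall>w. factor u w \<longrightarrow> factor u (rev w))"

definition cplx :: "(nat \<Rightarrow> 'a) \<Rightarrow> nat \<Rightarrow> nat" where
  "cplx u n = card {w. factor u w \<and> length w = n}"

definition pal_cplx :: "(nat \<Rightarrow> 'a) \<Rightarrow> nat \<Rightarrow> nat" where
  "pal_cplx u n = card {w. factor u w \<and> length w = n \<and> palindrome w}"

text \<open>Longest palindromic suffix (the empty suffix is always a palindrome).\<close>
definition lps :: "'a list \<Rightarrow> 'a list" where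
  "lps f = drop (length f - (GREATEST k. k \<le> length f \<and> palindrome (drop (length f - k) f))) f"

definition occurrences :: "'a list \<Rightarrow> 'a list \<Rightarrow> nat" where
  "occurrences p f = card {j. j + length p \<le> length f \<and> take (length p) (drop j f) = p}"

end

theory Submission
  imports Defs
begin

text \<open>
  Identify each factor with its reversal. For a class \<open>C\<close> of factors of length \<open>n\<close> other
  than the class of the prefix, extend the first occurrence of \<open>C\<close> in \<open>u\<close> by one letter to the
  left; this gives a class of non-palindromic factors of length \<open>n + 1\<close> (a palindromic extension
  would show \<open>C\<close> occurring one position earlier), and the map is injective. It is surjective by the
  hypothesis on palindromic suffixes: if \<open>g\<close> is the leftmost non-palindromic factor of length
  \<open>n + 1\<close> in its class, the stretch of \<open>u\<close> from the preceding occurrence of the class of its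
  length-\<open>n\<close> suffix \<open>x\<close> up to \<open>x\<close> is a complete return word to \<open>{x, rev x}\<close>, hence a palindrome
  since its longest palindromic suffix is unioccurrent, which contradicts the choice of \<open>g\<close>.
  Counting classes, \<open>(C(n) + P(n)) / 2 - 1 = (C(n + 1) - P(n + 1)) / 2\<close>.
\<close>

definition seg :: "(nat \<Rightarrow> 'a) \<Rightarrow> nat \<Rightarrow> nat \<Rightarrow> 'a list" where
  "seg u i l = map u [i..<i + l]"

lemma length_seg [simp]: "length (seg u i l) = l"
  by (simp add: seg_def)

lemma take_seg: "m \<le> l \<Longrightarrow> take m (seg u i l) = seg u i m"
  by (simp add: seg_def take_map)

lemma drop_seg: "m \<le> l \<Longrightarrow> drop m (seg u i l) = seg u (i + m) (l - m)"
  by (simp add: seg_def drop_map)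

lemma seg_rev_shift:
  assumes "seg u i (n + 1) = rev (seg u j (n + 1))"
  shows "seg u i n = rev (seg u (j + 1) n)"
proof -
  have "seg u i n = take n (seg u i (n + 1))"
    by (simp add: take_seg)
  also have "\<dots> = take n (rev (seg u j (n + 1)))"
    by (simp only: assms)
  also have "\<dots> = rev (drop 1 (seg u j (n + 1)))"
    by (simp add: take_rev)
  also have "\<dots> = rev (seg u (j + 1) n)"
    by (simp add: drop_seg)
  finally show ?thesis .
qed

definition factors :: "(nat \<Rightarrow> 'a) \<Rightarrow> nat \<Rightarrow> 'a list set" where
  "factors u m = {w. factor u w \<and> length w = m}"

lemma factors_iff_seg: "w \<in> factors u m \<longleftrightarrow> (\<exists>i. w = seg u i m)"
  by (auto simp: factors_def factor_def seg_def)

lemma factor_seg: "factor u (seg u i l)"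
  by (auto simp: factor_def seg_def)

lemma seg_in_factors: "seg u i m \<in> factors u m"
  by (auto simp: factors_iff_seg)

lemma finite_factors:
  assumes "finite (range u)"
  shows "finite (factors u m)"
proof (rule finite_subset)
  show "factors u m \<subseteq> {w. set w \<subseteq> range u \<and> length w = m}"
    by (auto simp: factors_iff_seg seg_def)
  show "finite {w. set w \<subseteq> range u \<and> length w = m}"
    using finite_lists_length_eq[OF assms] .
qed

lemma rev_in_factors:
  "closed_under_reversal u \<Longrightarrow> w \<in> factors u m \<Longrightarrow> rev w \<in> factors u m"
  by (simp add: factors_def closed_under_reversal_def)

lemma cplx_eq_card_factors: "cplx u m = card (factors u m)"
  by (simp add: cplx_def factors_def)

lemma pal_cplx_eq_card_factors: "pal_cplx u m = card {w \<in> factors u m. palindrome w}"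
  by (simp add: pal_cplx_def factors_def conj_assoc)

lemma lps_suffix_palindrome:
  shows lps_suffix: "lps f = drop (length f - length (lps f)) f"
    and palindrome_lps: "palindrome (lps f)"
proof -
  define K where "K = (GREATEST k. k \<le> length f \<and> palindrome (drop (length f - k) f))"
  have "K \<le> length f \<and> palindrome (drop (length f - K) f)"
    unfolding K_def
    by (rule GreatestI_nat[where k = 0 and b = "length f"]) (auto simp: palindrome_def)
  moreover have "lps f = drop (length f - K) f"
    by (simp add: lps_def K_def)
  ultimately show "lps f = drop (length f - length (lps f)) f" "palindrome (lps f)"
    by auto
qed

lemma occurrences_ne_1:
  assumes "i \<noteq> j"
    and "i + length p \<le> length f" "take (length p) (drop i f) = p"
    and "j + length p \<le> length f" "take (length p) (drop j f) = p"
  shows "occurrences p f \<noteq> 1"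
proof
  let ?S = "{k. k + length p \<le> length f \<and> take (length p) (drop k f) = p}"
  assume "occurrences p f = 1"
  then have "card ?S = 1"
    by (simp add: occurrences_def)
  then obtain m where "?S = {m}"
    by (rule card_1_singletonE)
  moreover have "i \<in> ?S" "j \<in> ?S"
    using assms by auto
  ultimately show False
    using \<open>i \<noteq> j\<close> by auto
qed

lemma lps_short_not_unioccurrent:
  fixes G x :: "'a list"
  assumes long: "n < length G"
    and suffix: "x = drop (length G - n) G"
    and prefix: "take n G \<in> {x, rev x}"
    and short: "length (lps G) < n"
  shows "occurrences (lps G) G \<noteq> 1"
proof -
  let ?L = "length G" and ?s = "lps G"
  have s_suffix_x: "?s = drop (n - length ?s) x"
    using lps_suffix[of G] suffix short long by (simp add: add.commute)
  have s_end: "take (length ?s) (drop (?L - length ?s) G) = ?s"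
    by (metis lps_suffix order_refl take_all length_drop)
  obtain i where "i < ?L - length ?s" "take (length ?s) (drop i G) = ?s"
  proof (cases "take n G = x")
    case True
    have "take (length ?s) (drop (n - length ?s) G) = drop (n - length ?s) (take n G)"
      using short by (simp add: drop_take)
    then show ?thesis
      using that[of "n - length ?s"] True s_suffix_x short long by simp
  next
    case False
    then have "take n G = rev x"
      using prefix by simp
    then have "take (length ?s) G = take (length ?s) (rev x)"
      using short by (metis min.strict_order_iff take_take)
    also have "\<dots> = rev (drop (n - length ?s) x)"
      using rev_drop[of "n - length ?s" x] short long suffix by simp
    also have "\<dots> = rev ?s"
      by (metis s_suffix_x)
    finally show ?thesis
      using that[of 0] palindrome_lps[of G] short long by (simp add: palindrome_def)
  qed
  then show ?thesis
    using occurrences_ne_1[of i "?L - length ?s" ?s G] s_end short long by simp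
qed

lemma palindrome_complete_return:
  fixes G x :: "'a list"
  assumes long: "n < length G"
    and suffix: "x = drop (length G - n) G"
    and prefix: "take n G \<in> {x, rev x}"
    and no_interior: "\<And>q. 0 < q \<Longrightarrow> q + n < length G \<Longrightarrow> take n (drop q G) \<notin> {x, rev x}"
    and unioccurrent: "occurrences (lps G) G = 1"
  shows "palindrome G"
proof -
  let ?L = "length G" and ?s = "lps G"
  define q where "q = ?L - length ?s"
  have s_at_q: "drop q G = ?s"
    unfolding q_def by (metis lps_suffix)
  have s_len: "length ?s = ?L - q"
    using s_at_q by (metis length_drop)
  have n_le: "n \<le> length ?s"
    using lps_short_not_unioccurrent[OF long suffix prefix] unioccurrent by force
  have "take n (drop q G) = take n (rev ?s)"
    using s_at_q palindrome_lps[of G] by (simp add: palindrome_def)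
  also have "\<dots> = rev (drop (length ?s - n) ?s)"
    using n_le by (simp add: rev_drop)
  also have "drop (length ?s - n) ?s = x"
  proof -
    have "length ?s - n + q = ?L - n"
      using s_len n_le q_def by linarith
    have "drop (length ?s - n) ?s = drop (length ?s - n) (drop q G)"
      by (simp only: s_at_q)
    also have "\<dots> = drop (?L - n) G"
      by (simp add: \<open>length ?s - n + q = ?L - n\<close>)
    finally show ?thesis
      using suffix by simp
  qed
  finally have rev_x_at_q: "take n (drop q G) = rev x" .
  show ?thesis
  proof (cases "q = 0")
    case True
    then show ?thesis
      using s_at_q palindrome_lps[of G] by simp
  next
    case False
    then have "length ?s = n"
      using no_interior[of q] rev_x_at_q n_le s_len by fastforce
    then have "?s = x" and "rev x = x"
      using s_at_q rev_x_at_q q_def suffix palindrome_lps[of G] by (auto simp: palindrome_def)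
    then have "take n G = ?s"
      using prefix by auto
    then have "occurrences ?s G \<noteq> 1"
      using occurrences_ne_1[of 0 q ?s G] s_at_q \<open>length ?s = n\<close> False q_def long by simp
    then show ?thesis
      using unioccurrent by simp
  qed
qed

definition rev_class :: "'a list \<Rightarrow> 'a list set" where
  "rev_class w = {w, rev w}"

lemma rev_class_eq_iff: "rev_class v = rev_class w \<longleftrightarrow> v = w \<or> v = rev w"
  by (auto simp: rev_class_def doubleton_eq_iff)

lemma rev_class_eqI: "C \<in> rev_class ` S \<Longrightarrow> z \<in> C \<Longrightarrow> C = rev_class z"
  by (auto simp: rev_class_def)

lemma rev_class_rev_mem: "C \<in> rev_class ` S \<Longrightarrow> z \<in> C \<Longrightarrow> rev z \<in> C"
  by (auto simp: rev_class_def)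

lemma card_rev_classes:
  fixes S :: "'a list set"
  assumes fin: "finite S" and closed: "\<And>w. w \<in> S \<Longrightarrow> rev w \<in> S"
  shows "2 * card (rev_class ` S) = card S + card {w \<in> S. palindrome w}"
proof -
  define P where "P = {w \<in> S. palindrome w}"
  define N where "N = {w \<in> S. \<not> palindrome w}"
  have "finite P" "finite N"
    using fin by (auto simp: P_def N_def)
  have card_S: "card S = card P + card N"
  proof -
    have "S = P \<union> N" "P \<inter> N = {}"
      by (auto simp: P_def N_def)
    then show ?thesis
      using \<open>finite P\<close> \<open>finite N\<close> by (simp add: card_Un_disjoint)
  qed
  have card_P: "card (rev_class ` P) = card P"
    by (rule card_image) (auto simp: inj_on_def rev_class_def P_def palindrome_def)
  have N_union: "\<Union> (rev_class ` N) = N"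
    using closed by (auto simp: rev_class_def N_def palindrome_def)
  have card_N: "2 * card (rev_class ` N) = card N"
  proof -
    have "2 * card (rev_class ` N) = card (\<Union> (rev_class ` N))"
    proof (rule card_partition)
      show "finite (rev_class ` N)" "finite (\<Union> (rev_class ` N))"
        using \<open>finite N\<close> N_union by simp_all
      show "\<And>c. c \<in> rev_class ` N \<Longrightarrow> card c = 2"
        by (auto simp: rev_class_def N_def palindrome_def card_2_iff)
      show "\<And>c1 c2. c1 \<in> rev_class ` N \<Longrightarrow> c2 \<in> rev_class ` N \<Longrightarrow> c1 \<noteq> c2 \<Longrightarrow> c1 \<inter> c2 = {}"
        by (auto simp: rev_class_def)
    qed
    then show ?thesis
      using N_union by simp
  qed
  have "rev_class ` S = rev_class ` P \<union> rev_class ` N"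
    by (auto simp: P_def N_def)
  moreover have "rev_class ` P \<inter> rev_class ` N = {}"
    by (auto simp: rev_class_def P_def N_def palindrome_def)
  ultimately have "card (rev_class ` S) = card (rev_class ` P) + card (rev_class ` N)"
    using \<open>finite P\<close> \<open>finite N\<close> by (simp add: card_Un_disjoint)
  then show ?thesis
    using card_S card_P card_N by (simp add: P_def)
qed

definition first_occ :: "(nat \<Rightarrow> 'a) \<Rightarrow> nat \<Rightarrow> 'a list set \<Rightarrow> nat" where
  "first_occ u n C = (LEAST j. seg u j n \<in> C)"

text \<open>Only meaningful when \<open>first_occ u n C > 0\<close>, i.e.\ for \<open>C\<close> other than the class of the
  prefix; for the prefix class the truncated subtraction yields a junk value.\<close>

definition left_extension :: "(nat \<Rightarrow> 'a) \<Rightarrow> nat \<Rightarrow> 'a list set \<Rightarrow> 'a list set" where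
  "left_extension u n C = rev_class (seg u (first_occ u n C - 1) (n + 1))"

lemma first_occ_mem:
  assumes "C \<in> rev_class ` factors u n"
  shows "seg u (first_occ u n C) n \<in> C"
proof -
  obtain i where "C = rev_class (seg u i n)"
    using assms by (auto simp: factors_iff_seg)
  then have "seg u i n \<in> C"
    by (simp add: rev_class_def)
  then show ?thesis
    unfolding first_occ_def by (rule LeastI)
qed

lemma first_occ_le: "seg u j n \<in> C \<Longrightarrow> first_occ u n C \<le> j"
  unfolding first_occ_def by (rule Least_le)

lemma first_occ_pos:
  assumes "C \<in> rev_class ` factors u n" "C \<noteq> rev_class (seg u 0 n)"
  shows "0 < first_occ u n C"
proof (rule ccontr)
  assume "\<not> 0 < first_occ u n C"
  then have "seg u 0 n \<in> C"
    using first_occ_mem[OF assms(1)] by simp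
  then show False
    using rev_class_eqI[OF assms(1)] assms(2) by blast
qed

lemma left_extension_not_palindrome:
  assumes "C \<in> rev_class ` factors u n" "C \<noteq> rev_class (seg u 0 n)"
  shows "left_extension u n C \<in> rev_class ` {w \<in> factors u (n + 1). \<not> palindrome w}"
proof -
  define j where "j = first_occ u n C"
  have "0 < j"
    using first_occ_pos[OF assms] by (simp add: j_def)
  have "\<not> palindrome (seg u (j - 1) (n + 1))"
  proof
    assume "palindrome (seg u (j - 1) (n + 1))"
    then have "seg u (j - 1) n = rev (seg u j n)"
      using seg_rev_shift[of u "j - 1" n "j - 1"] \<open>0 < j\<close> by (simp add: palindrome_def)
    then have "seg u (j - 1) n \<in> C"
      using rev_class_rev_mem[OF assms(1) first_occ_mem[OF assms(1)]] by (simp add: j_def)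
    then have "j \<le> j - 1"
      unfolding j_def by (rule first_occ_le)
    with \<open>0 < j\<close> show False
      by simp
  qed
  then show ?thesis
    by (auto simp: left_extension_def j_def seg_in_factors)
qed

lemma inj_on_left_extension:
  "inj_on (left_extension u n) (rev_class ` factors u n - {rev_class (seg u 0 n)})"
proof (rule inj_onI)
  fix C D
  assume C: "C \<in> rev_class ` factors u n - {rev_class (seg u 0 n)}"
    and D: "D \<in> rev_class ` factors u n - {rev_class (seg u 0 n)}"
    and same: "left_extension u n C = left_extension u n D"
  define i j where "i = first_occ u n C" and "j = first_occ u n D"
  have "0 < i" "0 < j"
    using first_occ_pos[of C u n] first_occ_pos[of D u n] C D by (simp_all add: i_def j_def)
  have C_occ: "seg u i n \<in> C" and D_occ: "seg u j n \<in> D"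
    using first_occ_mem C D by (auto simp: i_def j_def)
  have "seg u (i - 1) (n + 1) = seg u (j - 1) (n + 1)
      \<or> seg u (i - 1) (n + 1) = rev (seg u (j - 1) (n + 1))"
    using same by (simp add: left_extension_def rev_class_eq_iff i_def j_def)
  then show "C = D"
  proof
    assume "seg u (i - 1) (n + 1) = seg u (j - 1) (n + 1)"
    then have "drop 1 (seg u (i - 1) (n + 1)) = drop 1 (seg u (j - 1) (n + 1))"
      by simp
    then have "seg u i n = seg u j n"
      using \<open>0 < i\<close> \<open>0 < j\<close> by (simp add: drop_seg)
    then show "C = D"
      using rev_class_eqI C D C_occ D_occ by (metis DiffD1)
  next
    assume swap: "seg u (i - 1) (n + 1) = rev (seg u (j - 1) (n + 1))"
    then have "seg u (i - 1) n = rev (seg u j n)"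
      using seg_rev_shift \<open>0 < j\<close> by fastforce
    then have "j \<le> i - 1"
      using rev_class_rev_mem D D_occ first_occ_le unfolding j_def by (metis DiffD1)
    moreover from swap have "seg u (j - 1) (n + 1) = rev (seg u (i - 1) (n + 1))"
      by simp
    then have "seg u (j - 1) n = rev (seg u i n)"
      using seg_rev_shift \<open>0 < i\<close> by fastforce
    then have "i \<le> j - 1"
      using rev_class_rev_mem C C_occ first_occ_le unfolding i_def by (metis DiffD1)
    ultimately show "C = D"
      using \<open>0 < i\<close> \<open>0 < j\<close> by simp
  qed
qed

lemma palindrome_between_occurrences:
  assumes unioccurrent: "\<And>f. factor u f \<Longrightarrow> n \<le> length f \<Longrightarrow> occurrences (lps f) f = 1"
    and "k < j"
    and occ: "seg u k n \<in> rev_class (seg u j n)"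
    and none_between: "\<And>m. k < m \<Longrightarrow> m < j \<Longrightarrow> seg u m n \<notin> rev_class (seg u j n)"
  shows "palindrome (seg u k (j + n - k))"
proof (rule palindrome_complete_return)
  let ?G = "seg u k (j + n - k)"
  show "n < length ?G"
    using \<open>k < j\<close> by simp
  show "seg u j n = drop (length ?G - n) ?G"
    using \<open>k < j\<close> by (simp add: drop_seg)
  show "take n ?G \<in> {seg u j n, rev (seg u j n)}"
    using occ \<open>k < j\<close> by (simp add: take_seg rev_class_def)
  show "take n (drop q ?G) \<notin> {seg u j n, rev (seg u j n)}"
    if "0 < q" "q + n < length ?G" for q
  proof -
    have "take n (drop q ?G) = seg u (k + q) n"
      using that by (simp add: drop_seg take_seg)
    then show ?thesis
      using none_between[of "k + q"] that by (simp add: rev_class_def)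
  qed
  show "occurrences (lps ?G) ?G = 1"
    using \<open>k < j\<close> by (intro unioccurrent factor_seg) simp
qed

lemma suffix_class_no_earlier_occurrence:
  assumes unioccurrent: "\<And>f. factor u f \<Longrightarrow> n \<le> length f \<Longrightarrow> occurrences (lps f) f = 1"
    and not_palindrome: "\<not> palindrome (seg u i (n + 1))"
    and leftmost: "\<And>k. seg u k (n + 1) \<in> rev_class (seg u i (n + 1)) \<Longrightarrow> i \<le> k"
    and "k \<le> i"
  shows "seg u k n \<notin> rev_class (seg u (i + 1) n)"
proof
  let ?x = "seg u (i + 1) n"
  define P where "P m \<longleftrightarrow> m \<le> i \<and> seg u m n \<in> rev_class ?x" for m
  assume "seg u k n \<in> rev_class ?x"
  define k' where "k' = (GREATEST m. P m)"
  have "P k'"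
    unfolding k'_def
    by (rule GreatestI_nat[of P k i]) (use \<open>k \<le> i\<close> \<open>seg u k n \<in> rev_class ?x\<close> in \<open>auto simp: P_def\<close>)
  then have k': "k' \<le> i" "seg u k' n \<in> rev_class ?x"
    by (simp_all add: P_def)
  have last: "m \<le> k'" if "m \<le> i" "seg u m n \<in> rev_class ?x" for m
    unfolding k'_def by (rule Greatest_le_nat[of P m i]) (use that in \<open>auto simp: P_def\<close>)
  define G where "G = seg u k' (i + 1 + n - k')"
  have "palindrome G"
    unfolding G_def
  proof (rule palindrome_between_occurrences[OF unioccurrent])
    show "k' < i + 1" "seg u k' n \<in> rev_class ?x"
      using k' by simp_all
    show "seg u m n \<notin> rev_class ?x" if "k' < m" "m < i + 1" for m
      using last[of m] that by auto
  qed
  show False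
  proof (cases "k' = i")
    case True
    then show False
      using \<open>palindrome G\<close> not_palindrome by (simp add: G_def)
  next
    case False
    then have "k' < i"
      using k'(1) by simp
    have "seg u k' (n + 1) = take (n + 1) (rev G)"
      using \<open>palindrome G\<close> \<open>k' < i\<close> by (simp add: G_def palindrome_def take_seg)
    also have "\<dots> = rev (seg u i (n + 1))"
      using \<open>k' < i\<close> by (simp add: G_def take_rev drop_seg)
    finally have "i \<le> k'"
      by (intro leftmost) (simp add: rev_class_def)
    with \<open>k' < i\<close> show False
      by simp
  qed
qed

lemma left_extension_surj:
  assumes unioccurrent: "\<And>f. factor u f \<Longrightarrow> n \<le> length f \<Longrightarrow> occurrences (lps f) f = 1"
    and e: "e \<in> rev_class ` {w \<in> factors u (n + 1). \<not> palindrome w}"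
  shows "e \<in> left_extension u n ` (rev_class ` factors u n - {rev_class (seg u 0 n)})"
proof -
  obtain i0 where "seg u i0 (n + 1) \<in> e"
    using e by (auto simp: factors_iff_seg rev_class_def)
  define i where "i = (LEAST i. seg u i (n + 1) \<in> e)"
  have "seg u i (n + 1) \<in> e"
    unfolding i_def by (rule LeastI) fact
  then have e_eq: "e = rev_class (seg u i (n + 1))"
    using e by (rule rev_class_eqI[rotated])
  have not_palindrome: "\<not> palindrome (seg u i (n + 1))"
    using e \<open>seg u i (n + 1) \<in> e\<close> by (auto simp: rev_class_def palindrome_def)
  have leftmost: "i \<le> k" if "seg u k (n + 1) \<in> rev_class (seg u i (n + 1))" for k
    unfolding i_def using that e_eq by (intro Least_le) simp
  define C where "C = rev_class (seg u (i + 1) n)"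
  have none_before: "seg u k n \<notin> C" if "k \<le> i" for k
    unfolding C_def using suffix_class_no_earlier_occurrence[OF unioccurrent not_palindrome leftmost that] .
  have C_class: "C \<in> rev_class ` factors u n"
    by (simp add: C_def seg_in_factors)
  have "first_occ u n C \<le> i + 1"
    by (rule first_occ_le) (simp add: C_def rev_class_def)
  moreover have "\<not> first_occ u n C \<le> i"
    using none_before first_occ_mem[OF C_class] by blast
  ultimately have "first_occ u n C = i + 1"
    by simp
  then have "e = left_extension u n C"
    by (simp add: left_extension_def e_eq)
  moreover have "C \<noteq> rev_class (seg u 0 n)"
    using none_before[of 0] by (auto simp: rev_class_def)
  ultimately show ?thesis
    using C_class by blast
qed

lemma bij_betw_left_extension:
  assumes unioccurrent: "\<And>f. factor u f \<Longrightarrow> n \<le> length f \<Longrightarrow> occurrences (lps f) f = 1"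
  shows "bij_betw (left_extension u n) (rev_class ` factors u n - {rev_class (seg u 0 n)})
    (rev_class ` {w \<in> factors u (n + 1). \<not> palindrome w})"
proof (rule bij_betw_imageI)
  show "inj_on (left_extension u n) (rev_class ` factors u n - {rev_class (seg u 0 n)})"
    by (rule inj_on_left_extension)
  show "left_extension u n ` (rev_class ` factors u n - {rev_class (seg u 0 n)})
    = rev_class ` {w \<in> factors u (n + 1). \<not> palindrome w}"
  proof
    show "left_extension u n ` (rev_class ` factors u n - {rev_class (seg u 0 n)})
      \<subseteq> rev_class ` {w \<in> factors u (n + 1). \<not> palindrome w}"
      by (rule image_subsetI) (use left_extension_not_palindrome in blast)
    show "rev_class ` {w \<in> factors u (n + 1). \<not> palindrome w}
      \<subseteq> left_extension u n ` (rev_class ` factors u n - {rev_class (seg u 0 n)})"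
      by (rule subsetI) (rule left_extension_surj[OF unioccurrent])
  qed
qed

lemma complexity_difference:
  assumes "finite (range u)" and "closed_under_reversal u"
    and unioccurrent: "\<And>f. factor u f \<Longrightarrow> n \<le> length f \<Longrightarrow> occurrences (lps f) f = 1"
  shows "2 + int (cplx u (n + 1)) - int (cplx u n) = int (pal_cplx u (n + 1)) + int (pal_cplx u n)"
proof -
  let ?classes = "rev_class ` factors u n"
  let ?prefix_class = "rev_class (seg u 0 n)"
  let ?pal = "{w \<in> factors u (n + 1). palindrome w}"
  let ?non_pal = "{w \<in> factors u (n + 1). \<not> palindrome w}"
  have fin: "finite (factors u m)" for m
    using \<open>finite (range u)\<close> by (rule finite_factors)
  have closed: "w \<in> factors u m \<Longrightarrow> rev w \<in> factors u m" for w m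
    using \<open>closed_under_reversal u\<close> by (rule rev_in_factors)
  have "bij_betw (left_extension u n) (?classes - {?prefix_class}) (rev_class ` ?non_pal)"
    using unioccurrent by (rule bij_betw_left_extension)
  then have "card (?classes - {?prefix_class}) = card (rev_class ` ?non_pal)"
    by (rule bij_betw_same_card)
  moreover have "card ?classes = card (?classes - {?prefix_class}) + 1"
  proof -
    have "?prefix_class \<in> ?classes"
      by (simp add: seg_in_factors)
    moreover have "finite ?classes"
      using fin[of n] by simp
    ultimately show ?thesis
      using card.remove[of ?classes ?prefix_class] by simp
  qed
  moreover have "2 * card ?classes = cplx u n + pal_cplx u n"
    using card_rev_classes[OF fin closed]
    by (simp add: cplx_eq_card_factors pal_cplx_eq_card_factors)
  moreover have "2 * card (rev_class ` ?non_pal) = card ?non_pal"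
  proof -
    have "finite ?non_pal"
      using fin[of "n + 1"] by simp
    moreover have "rev w \<in> ?non_pal" if "w \<in> ?non_pal" for w
      using that closed by (auto simp: palindrome_def)
    ultimately show ?thesis
      using card_rev_classes[of ?non_pal] by simp
  qed
  moreover have "card ?non_pal + card ?pal = cplx u (n + 1)"
  proof -
    have "finite ?non_pal" "finite ?pal"
      using fin[of "n + 1"] by simp_all
    then have "card (?non_pal \<union> ?pal) = card ?non_pal + card ?pal"
      by (rule card_Un_disjoint) auto
    moreover have "?non_pal \<union> ?pal = factors u (n + 1)"
      by auto
    ultimately show ?thesis
      by (simp add: cplx_eq_card_factors)
  qed
  ultimately show ?thesis
    by (simp add: pal_cplx_eq_card_factors)
qed

theorem proposition4p5:
  fixes u :: "nat \<Rightarrow> 'a" and H :: int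
  assumes "finite (range u)"
    and "closed_under_reversal u"
    and "\<And>f. factor u f \<Longrightarrow> int (length f) \<ge> H \<Longrightarrow> occurrences (lps f) f = 1"
  shows "\<forall>n::nat. int n \<ge> H \<longrightarrow>
     2 + int (cplx u (n + 1)) - int (cplx u n) = int (pal_cplx u (n + 1)) + int (pal_cplx u n)"
proof (intro allI impI)
  fix n :: nat
  assume "int n \<ge> H"
  then have "occurrences (lps f) f = 1" if "factor u f" "n \<le> length f" for f
    using assms(3) that by simp
  then show "2 + int (cplx u (n + 1)) - int (cplx u n) = int (pal_cplx u (n + 1)) + int (pal_cplx u n)"
    by (rule complexity_difference[OF assms(1,2)])
qed

end
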